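(* For every $n\ge3$, no vertex of the unweighted path $P_n$ is sedentary.
   Context: For a graph with adjacency matrix $A$, $U(t)=e^{itA}$. A vertex $u$ is sedentary if $\inf_{t>0}|U(t)_{u,u}|\ge C$ for some constant $0<C\le1$, and not sedentary if $\inf_{t>0}|U(t)_{u,u}|=0$. *)

theory Defs
  imports "HOL-Analysis.Analysis"
begin

definition path_adj :: "nat \<Rightarrow> nat \<Rightarrow> nat \<Rightarrow> complex" where
  "path_adj n i j = (if i < n \<and> j < n \<and> (i = Suc j \<or> j = Suc i) then 1 else 0)"

fun mat_pow :: "nat \<Rightarrow> (nat \<Rightarrow> nat \<Rightarrow> complex) \<Rightarrow> nat \<Rightarrow> nat \<Rightarrow> nat \<Rightarrow> complex" where
  "mat_pow n A 0 i j = (if i = j then 1 else 0)"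
| "mat_pow n A (Suc k) i j = (\<Sum>l<n. mat_pow n A k i l * A l j)"

definition transition :: "nat \<Rightarrow> (nat \<Rightarrow> nat \<Rightarrow> complex) \<Rightarrow> real \<Rightarrow> nat \<Rightarrow> nat \<Rightarrow> complex" where
  "transition n A t u v = (\<Sum>k. ((\<i> * of_real t) ^ k / of_nat (fact k)) * mat_pow n A k u v)"

definition sedentary :: "nat \<Rightarrow> (nat \<Rightarrow> nat \<Rightarrow> complex) \<Rightarrow> nat \<Rightarrow> bool" where
  "sedentary n A u \<longleftrightarrow> (\<exists>C::real. 0 < C \<and> C \<le> 1 \<and>
      (INF t\<in>{0<..}. norm (transition n A t u u)) \<ge> C)"

end

theory Submission
  imports Defs "HOL-Real_Asymp.Real_Asymp"
begin

text \<open>The diagonal entry \<open>U(t)\<^sub>u\<^sub>u\<close> of the path \<open>P\<^sub>n\<close> is a real cosine polynomial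
  \<open>g t = (\<Sum>k. w\<^sub>k * cos (t * \<lambda>\<^sub>k))\<close>: the eigenvalues \<open>\<lambda>\<^sub>k = 2 cos (\<pi> k / (n + 1))\<close> are distinct and
  lie in \<open>(-2, 2)\<close>, the weights are nonnegative with sum \<open>1\<close>, and \<open>w\<close> is invariant under
  \<open>\<lambda> \<mapsto> -\<lambda>\<close>. If \<open>\<bar>g t\<bar> \<ge> S > 0\<close> for all \<open>t > 0\<close>, then \<open>g \<ge> S\<close> because \<open>g 0 = 1\<close>.
  Multiply \<open>g - S\<close> by the nonnegative kernel \<open>\<bar>\<Sum>m\<le>M. (-1)^m e^(i m \<mu> t)\<bar>\<^sup>2\<close> with \<open>\<mu> = \<lambda>\<^sub>j \<ge> 1\<close>
  and take the mean value in \<open>t\<close>: as \<open>\<bar>\<lambda>\<^sub>k\<bar> < 2 \<mu>\<close>, only the frequencies \<open>0\<close> and \<open>\<plusminus>\<mu>\<close> of \<open>g\<close>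
  contribute, and \<open>M \<rightarrow> \<infinity>\<close> yields \<open>S + 2 w\<^sub>j \<le> w\<^sub>0\<close>, where \<open>w\<^sub>0\<close> is the weight of the
  eigenvalue \<open>0\<close>. But \<open>w\<^sub>0 = 0\<close> for even \<open>n\<close>, and for odd \<open>n\<close> one has \<open>w\<^sub>0 \<le> 2 / (n + 1)\<close> while
  some \<open>\<lambda>\<^sub>j \<ge> 1\<close> has \<open>w\<^sub>j \<ge> 1 / (n + 1)\<close>; so \<open>S \<le> 0\<close>.\<close>

section \<open>Mean values\<close>

definition has_mean_value :: "(real \<Rightarrow> real) \<Rightarrow> real \<Rightarrow> bool" where
  "has_mean_value f L \<longleftrightarrow> continuous_on UNIV f \<and>
     ((\<lambda>T. integral {0..T} f / T) \<longlongrightarrow> L) at_top"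

lemma has_mean_value_integrable_on:
  "has_mean_value f L \<Longrightarrow> f integrable_on {0..T}"
  unfolding has_mean_value_def
  by (auto intro: integrable_continuous_interval continuous_on_subset)

lemma has_mean_value_cos: "has_mean_value (\<lambda>t. cos (t * \<omega>)) (if \<omega> = 0 then 1 else 0)"
  unfolding has_mean_value_def
proof (intro conjI)
  show "continuous_on UNIV (\<lambda>t. cos (t * \<omega>))"
    by (intro continuous_intros)
  have integral: "integral {0..T} (\<lambda>t. cos (t * \<omega>)) = sin (T * \<omega>) / \<omega>"
    if "T \<ge> 0" "\<omega> \<noteq> 0" for T
  proof -
    have "((\<lambda>t. sin (t * \<omega>) / \<omega>) has_real_derivative cos (t * \<omega>)) (at t within {0..T})" for t
      using that by (auto intro!: derivative_eq_intros)
    then have "((\<lambda>t. cos (t * \<omega>)) has_integral (sin (T * \<omega>) / \<omega> - sin (0 * \<omega>) / \<omega>)) {0..T}"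
      using that by (intro fundamental_theorem_of_calculus)
        (auto simp: has_real_derivative_iff_has_vector_derivative[symmetric])
    then show ?thesis
      by (simp add: integral_unique)
  qed
  show "((\<lambda>T. integral {0..T} (\<lambda>t. cos (t * \<omega>)) / T) \<longlongrightarrow> (if \<omega> = 0 then 1 else 0)) at_top"
  proof (cases "\<omega> = 0")
    case True
    have "\<forall>\<^sub>F T in at_top. integral {0..T} (\<lambda>t. cos (t * \<omega>)) / T = 1"
      using eventually_gt_at_top[of 0] by eventually_elim (simp add: True)
    then show ?thesis
      using True by (simp add: tendsto_eventually)
  next
    case False
    have "((\<lambda>T. sin (T * \<omega>) / T) \<longlongrightarrow> 0) at_top"
      by real_asymp
    from tendsto_mult_right_zero[OF this, of "1 / \<omega>"]
    have "((\<lambda>T. sin (T * \<omega>) / \<omega> / T) \<longlongrightarrow> 0) at_top"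
      by simp
    moreover have "\<forall>\<^sub>F T in at_top. sin (T * \<omega>) / \<omega> / T = integral {0..T} (\<lambda>t. cos (t * \<omega>)) / T"
      using eventually_ge_at_top[of 0] by eventually_elim (simp add: integral False)
    ultimately show ?thesis
      using False by (simp add: tendsto_cong)
  qed
qed

lemma has_mean_value_cmult:
  "has_mean_value f L \<Longrightarrow> has_mean_value (\<lambda>t. c * f t) (c * L)"
proof -
  assume mean: "has_mean_value f L"
  then have "((\<lambda>T. c * (integral {0..T} f / T)) \<longlongrightarrow> c * L) at_top"
    by (intro tendsto_mult_left) (simp add: has_mean_value_def)
  then show ?thesis
    using mean by (auto simp: has_mean_value_def intro!: continuous_intros)
qed

lemma has_mean_value_sum:
  assumes "finite I" "\<And>i. i \<in> I \<Longrightarrow> has_mean_value (f i) (L i)"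
  shows "has_mean_value (\<lambda>t. \<Sum>i\<in>I. f i t) (\<Sum>i\<in>I. L i)"
proof -
  have "((\<lambda>T. \<Sum>i\<in>I. integral {0..T} (f i) / T) \<longlongrightarrow> (\<Sum>i\<in>I. L i)) at_top"
    using assms by (intro tendsto_sum) (auto simp: has_mean_value_def)
  moreover have "(\<Sum>i\<in>I. integral {0..T} (f i) / T) = integral {0..T} (\<lambda>t. \<Sum>i\<in>I. f i t) / T" for T
    using assms by (subst integral_sum) (auto intro: has_mean_value_integrable_on simp: sum_divide_distrib)
  ultimately show ?thesis
    using assms by (auto simp: has_mean_value_def intro!: continuous_on_sum)
qed

lemma has_mean_value_add:
  "has_mean_value f L \<Longrightarrow> has_mean_value g L' \<Longrightarrow> has_mean_value (\<lambda>t. f t + g t) (L + L')"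
  using has_mean_value_sum[of "{True, False}" "\<lambda>b. if b then f else g" "\<lambda>b. if b then L else L'"]
  by simp

lemma has_mean_value_diff:
  "has_mean_value f L \<Longrightarrow> has_mean_value g L' \<Longrightarrow> has_mean_value (\<lambda>t. f t - g t) (L - L')"
  using has_mean_value_add[of f L "\<lambda>t. (-1) * g t" "(-1) * L'"] has_mean_value_cmult[of g L' "-1"]
  by simp

lemma has_mean_value_nonneg:
  assumes "has_mean_value f L" "\<And>t. t \<ge> 0 \<Longrightarrow> f t \<ge> 0"
  shows "L \<ge> 0"
proof (rule tendsto_lowerbound)
  show "((\<lambda>T. integral {0..T} f / T) \<longlongrightarrow> L) at_top"
    using assms(1) by (simp add: has_mean_value_def)
  show "\<forall>\<^sub>F T in at_top. 0 \<le> integral {0..T} f / T"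
    using eventually_gt_at_top[of 0]
  proof eventually_elim
    case (elim T)
    have "0 \<le> integral {0..T} f"
      using assms by (intro integral_nonneg has_mean_value_integrable_on) auto
    then show ?case
      using elim by simp
  qed
qed simp

section \<open>An alternating kernel\<close>

text \<open>The kernel is \<open>\<bar>\<Sum>m\<le>M. (-1)^m * exp (\<i> * m * \<mu> * t)\<bar>\<^sup>2\<close>, written as a cosine polynomial.\<close>
definition alternating_kernel :: "nat \<Rightarrow> real \<Rightarrow> real \<Rightarrow> real" where
  "alternating_kernel M \<mu> t =
     (\<Sum>m\<le>M. \<Sum>m'\<le>M. (-1) ^ (m + m') * cos (t * ((real m - real m') * \<mu>)))"

definition alternating_kernel_coeff :: "nat \<Rightarrow> real \<Rightarrow> real" where
  "alternating_kernel_coeff M e =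
     (\<Sum>m\<le>M. \<Sum>m'\<le>M. if real m - real m' = e then (-1) ^ (m + m') else 0)"

lemma alternating_kernel_nonneg: "alternating_kernel M \<mu> t \<ge> 0"
proof -
  let ?c = "\<lambda>m. (-1) ^ m * cos (t * real m * \<mu>)" and ?s = "\<lambda>m. (-1) ^ m * sin (t * real m * \<mu>)"
  have "alternating_kernel M \<mu> t = (\<Sum>m\<le>M. \<Sum>m'\<le>M. ?c m * ?c m' + ?s m * ?s m')"
    unfolding alternating_kernel_def
  proof (intro sum.cong refl)
    fix m m'
    have "t * ((real m - real m') * \<mu>) = t * real m * \<mu> - t * real m' * \<mu>"
      by (simp add: algebra_simps)
    then show "(-1) ^ (m + m') * cos (t * ((real m - real m') * \<mu>)) = ?c m * ?c m' + ?s m * ?s m'"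
      by (simp add: cos_diff power_add algebra_simps)
  qed
  also have "\<dots> = (\<Sum>m\<le>M. ?c m)\<^sup>2 + (\<Sum>m\<le>M. ?s m)\<^sup>2"
    by (simp add: power2_eq_square sum_product sum.distrib)
  finally show ?thesis
    by simp
qed

lemma alternating_kernel_coeff_uminus:
  "alternating_kernel_coeff M (- e) = alternating_kernel_coeff M e"
proof -
  have "alternating_kernel_coeff M (- e) =
      (\<Sum>m\<le>M. \<Sum>m'\<le>M. if real m' - real m = e then (-1) ^ (m' + m) else 0)"
    unfolding alternating_kernel_coeff_def
    by (intro sum.cong refl) (auto simp: add.commute)
  also have "\<dots> = alternating_kernel_coeff M e"
    unfolding alternating_kernel_coeff_def by (rule sum.swap)
  finally show ?thesis .
qed

lemma alternating_kernel_coeff_0: "alternating_kernel_coeff M 0 = real M + 1"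
proof -
  have "alternating_kernel_coeff M 0 = (\<Sum>m\<le>M. \<Sum>m'\<le>M. if m' = m then 1 else 0)"
    unfolding alternating_kernel_coeff_def
    by (intro sum.cong refl) (auto simp: power_add)
  then show ?thesis
    by simp
qed

lemma alternating_kernel_coeff_1: "alternating_kernel_coeff M 1 = - real M"
proof -
  have "alternating_kernel_coeff M 1 = (\<Sum>m\<le>M. \<Sum>m'\<le>M. if m = Suc m' then -1 else 0)"
    unfolding alternating_kernel_coeff_def
    by (intro sum.cong refl) auto
  also have "\<dots> = (\<Sum>m'\<le>M. if Suc m' \<le> M then -1 else 0)"
    by (subst sum.swap) (simp add: sum.delta)
  also have "\<dots> = (\<Sum>m'<M. -1)"
    by (auto simp: lessThan_Suc_atMost[symmetric] intro!: sum.cong)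
  finally show ?thesis
    by simp
qed

lemma alternating_kernel_coeff_eq_0:
  assumes "\<bar>e\<bar> < 2" "e \<notin> {-1, 0, 1}"
  shows "alternating_kernel_coeff M e = 0"
proof -
  have "real m - real m' \<noteq> e" for m m'
  proof -
    have "m = m' \<or> m = Suc m' \<or> m' = Suc m \<or> m' + 2 \<le> m \<or> m + 2 \<le> m'"
      by linarith
    then show ?thesis
      using assms by (elim disjE) auto
  qed
  then show ?thesis
    by (simp add: alternating_kernel_coeff_def)
qed

lemma alternating_kernel_coeff_eq:
  assumes "\<bar>e\<bar> < 2"
  shows "alternating_kernel_coeff M e = (if e = 0 then real M + 1 else if \<bar>e\<bar> = 1 then - real M else 0)"
proof -
  have "e = 0 \<or> e = 1 \<or> e = -1 \<or> e \<notin> {-1, 0, 1}"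
    by auto
  then show ?thesis
    using assms alternating_kernel_coeff_uminus[of M 1]
    by (auto simp: alternating_kernel_coeff_0 alternating_kernel_coeff_1 alternating_kernel_coeff_eq_0)
qed

lemma has_mean_value_cos_mult_alternating_kernel:
  assumes "\<mu> \<noteq> 0"
  shows "has_mean_value (\<lambda>t. cos (t * \<omega>) * alternating_kernel M \<mu> t)
           (alternating_kernel_coeff M (\<omega> / \<mu>))"
proof -
  define d where "d m m' = (real m - real m') * \<mu>" for m m'
  have expand: "cos (t * \<omega>) * alternating_kernel M \<mu> t =
      (\<Sum>m\<le>M. \<Sum>m'\<le>M. ((-1) ^ (m + m') / 2) * (cos (t * (\<omega> - d m m')) + cos (t * (\<omega> + d m m'))))" for t
    unfolding alternating_kernel_def sum_distrib_left
  proof (intro sum.cong refl)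
    fix m m'
    have "cos (t * \<omega>) * cos (t * d m m') = (cos (t * (\<omega> - d m m')) + cos (t * (\<omega> + d m m'))) / 2"
      by (simp add: cos_times_cos right_diff_distrib distrib_left)
    then show "cos (t * \<omega>) * ((-1) ^ (m + m') * cos (t * ((real m - real m') * \<mu>))) =
        ((-1) ^ (m + m') / 2) * (cos (t * (\<omega> - d m m')) + cos (t * (\<omega> + d m m')))"
      by (simp add: d_def)
  qed
  have "has_mean_value (\<lambda>t. cos (t * \<omega>) * alternating_kernel M \<mu> t)
      (\<Sum>m\<le>M. \<Sum>m'\<le>M. ((-1) ^ (m + m') / 2) *
          ((if \<omega> - d m m' = 0 then 1 else 0) + (if \<omega> + d m m' = 0 then 1 else 0)))"
    unfolding expand
    by (intro has_mean_value_sum has_mean_value_cmult has_mean_value_add has_mean_value_cos finite_atMost)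
  also have "(\<Sum>m\<le>M. \<Sum>m'\<le>M. ((-1) ^ (m + m') / 2) *
          ((if \<omega> - d m m' = 0 then 1 else 0) + (if \<omega> + d m m' = 0 then 1 else 0))) =
      (alternating_kernel_coeff M (\<omega> / \<mu>) + alternating_kernel_coeff M (- (\<omega> / \<mu>))) / 2"
  proof -
    have summand: "((-1::real) ^ (m + m') / 2) * ((if \<omega> - d m m' = 0 then 1 else 0) + (if \<omega> + d m m' = 0 then 1 else 0)) =
        (if real m - real m' = \<omega> / \<mu> then (-1) ^ (m + m') else 0) / 2 +
        (if real m - real m' = - (\<omega> / \<mu>) then (-1) ^ (m + m') else 0) / 2" for m m'
      using assms by (auto simp: d_def field_simps)
    show ?thesis
      by (simp only: summand alternating_kernel_coeff_def add_divide_distrib sum_divide_distrib sum.distrib)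
  qed
  finally show ?thesis
    by (simp add: alternating_kernel_coeff_uminus)
qed

lemma has_mean_value_alternating_kernel:
  "\<mu> \<noteq> 0 \<Longrightarrow> has_mean_value (alternating_kernel M \<mu>) (real M + 1)"
  using has_mean_value_cos_mult_alternating_kernel[of \<mu> 0 M]
  by (simp add: alternating_kernel_coeff_0)

section \<open>Cosine polynomials bounded away from zero\<close>

lemma has_mean_value_cos_poly_mult_alternating_kernel:
  fixes K :: "'a set" and c \<omega> :: "'a \<Rightarrow> real"
  assumes "finite K" "inj_on \<omega> K" "j \<in> K" "j' \<in> K"
    and "\<mu> > 0" "\<omega> j = \<mu>" "\<omega> j' = - \<mu>" "\<And>k. k \<in> K \<Longrightarrow> \<bar>\<omega> k\<bar> < 2 * \<mu>"
  shows "has_mean_value (\<lambda>t. (\<Sum>k\<in>K. c k * cos (t * \<omega> k)) * alternating_kernel M \<mu> t)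
    ((real M + 1) * (\<Sum>k\<in>{k\<in>K. \<omega> k = 0}. c k) - real M * (c j + c j'))"
proof -
  let ?a = "alternating_kernel_coeff M"
  have "has_mean_value (\<lambda>t. \<Sum>k\<in>K. c k * (cos (t * \<omega> k) * alternating_kernel M \<mu> t))
      (\<Sum>k\<in>K. c k * ?a (\<omega> k / \<mu>))"
    using assms by (intro has_mean_value_sum has_mean_value_cmult
        has_mean_value_cos_mult_alternating_kernel) auto
  moreover have "c k * ?a (\<omega> k / \<mu>) =
      (if \<omega> k = 0 then (real M + 1) * c k else 0) - (if k \<in> {j, j'} then real M * c k else 0)"
    if "k \<in> K" for k
  proof -
    have "\<bar>\<omega> k / \<mu>\<bar> < 2"
      using assms(5,8) that by (simp add: abs_divide pos_divide_less_eq mult.commute)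
    moreover have "\<bar>\<omega> k / \<mu>\<bar> = 1 \<longleftrightarrow> \<bar>\<omega> k\<bar> = \<mu>"
      using assms(5) by (auto simp: abs_divide divide_eq_1_iff)
    moreover have "\<bar>\<omega> k\<bar> = \<mu> \<longleftrightarrow> \<omega> k = \<omega> j \<or> \<omega> k = \<omega> j'"
      using assms(5-7) by linarith
    moreover have "\<omega> k = \<omega> j \<or> \<omega> k = \<omega> j' \<longleftrightarrow> k \<in> {j, j'}"
      using assms(2-4) that by (auto dest: inj_onD)
    ultimately show ?thesis
      using assms by (auto simp: alternating_kernel_coeff_eq)
  qed
  moreover have "(\<Sum>k\<in>K. if k \<in> {j, j'} then real M * c k else 0) = real M * (c j + c j')"
  proof -
    have "{k\<in>K. k \<in> {j, j'}} = {j, j'}" "j \<noteq> j'"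
      using assms(3-7) by auto
    then show ?thesis
      using assms(1) by (simp only: sum.inter_filter[symmetric]) (simp add: distrib_left)
  qed
  moreover have "(\<Sum>k\<in>K. if \<omega> k = 0 then (real M + 1) * c k else 0) =
      (real M + 1) * (\<Sum>k\<in>{k\<in>K. \<omega> k = 0}. c k)"
    by (subst sum.inter_filter[OF assms(1)]) (auto simp: sum_distrib_left intro!: sum.cong)
  ultimately show ?thesis
    by (simp add: sum_subtractf sum_distrib_left sum_distrib_right mult.assoc cong: sum.cong)
qed

text \<open>Averaging \<open>(g - S) * alternating_kernel M \<mu>\<close>, with \<open>g\<close> the cosine polynomial, gives
  \<open>(M + 1) (S + c j + c j' - C) \<le> c j + c j'\<close> for every \<open>M\<close>, where \<open>C\<close> is the weight of frequency \<open>0\<close>.\<close>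
lemma cos_poly_lower_bound_le:
  fixes K :: "'a set" and c \<omega> :: "'a \<Rightarrow> real"
  assumes "finite K" "inj_on \<omega> K" "j \<in> K" "j' \<in> K"
    and "\<mu> > 0" "\<omega> j = \<mu>" "\<omega> j' = - \<mu>" "\<And>k. k \<in> K \<Longrightarrow> \<bar>\<omega> k\<bar> < 2 * \<mu>"
    and lower: "\<And>t. t \<ge> 0 \<Longrightarrow> S \<le> (\<Sum>k\<in>K. c k * cos (t * \<omega> k))"
  shows "S + c j + c j' \<le> (\<Sum>k\<in>{k\<in>K. \<omega> k = 0}. c k)"
proof (rule ccontr)
  define C where "C = (\<Sum>k\<in>{k\<in>K. \<omega> k = 0}. c k)"
  assume "\<not> ?thesis"
  then have "S + c j + c j' - C > 0"
    by (simp add: C_def)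
  then obtain M where M: "c j + c j' < real M * (S + c j + c j' - C)"
    using ex_less_of_nat_mult by blast
  let ?g = "\<lambda>t. \<Sum>k\<in>K. c k * cos (t * \<omega> k)" and ?P = "alternating_kernel M \<mu>"
  have "has_mean_value (\<lambda>t. ?g t * ?P t - S * ?P t) ((real M + 1) * C - real M * (c j + c j') - S * (real M + 1))"
    unfolding C_def using assms
    by (intro has_mean_value_diff has_mean_value_cmult has_mean_value_alternating_kernel
        has_mean_value_cos_poly_mult_alternating_kernel) auto
  moreover have "?g t * ?P t - S * ?P t \<ge> 0" if "t \<ge> 0" for t
    using lower[OF that] alternating_kernel_nonneg[of M \<mu> t]
    by (simp add: mult_right_mono flip: left_diff_distrib)
  ultimately have "(real M + 1) * C - real M * (c j + c j') - S * (real M + 1) \<ge> 0"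
    by (rule has_mean_value_nonneg)
  then show False
    using M \<open>S + c j + c j' - C > 0\<close> by (simp add: algebra_simps)
qed

lemma lower_bound_of_abs_lower_bound:
  fixes g :: "real \<Rightarrow> real"
  assumes cont: "continuous_on {0..} g" and "0 < g 0" "0 < S"
    and abs_bound: "\<And>t. t > 0 \<Longrightarrow> S \<le> \<bar>g t\<bar>"
    and "t \<ge> 0"
  shows "S \<le> g t"
proof -
  have pos: "g t > 0" if "t > 0" for t
  proof (rule ccontr)
    assume "\<not> g t > 0"
    then obtain x where x: "0 \<le> x" "x \<le> t" "g x = 0"
      using IVT2'[of g t 0 0] \<open>0 < g 0\<close> \<open>t > 0\<close> continuous_on_subset[OF cont] by force
    then have "x > 0"
      using \<open>0 < g 0\<close> by (cases "x = 0") auto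
    then show False
      using abs_bound[of x] x \<open>0 < S\<close> by simp
  qed
  show ?thesis
  proof (cases "t = 0")
    case True
    have "(g \<longlongrightarrow> g 0) (at 0 within {0..})"
      using cont by (simp add: continuous_on_def)
    then have "(g \<longlongrightarrow> g 0) (at_right 0)"
      by (rule tendsto_within_subset) auto
    moreover have "\<forall>\<^sub>F t in at_right 0. S \<le> g t"
      using eventually_at_right_less[of "0::real"]
      by eventually_elim (use abs_bound pos in fastforce)
    ultimately show ?thesis
      using True by (auto intro: tendsto_lowerbound)
  next
    case False
    then show ?thesis
      using abs_bound[of t] pos[of t] \<open>t \<ge> 0\<close> by simp
  qed
qed

lemma INF_abs_cos_poly_eq_0:
  fixes K :: "'a set" and c \<omega> :: "'a \<Rightarrow> real"
  assumes "finite K" "inj_on \<omega> K" "j \<in> K" "j' \<in> K"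
    and "\<mu> > 0" "\<omega> j = \<mu>" "\<omega> j' = - \<mu>" "\<And>k. k \<in> K \<Longrightarrow> \<bar>\<omega> k\<bar> < 2 * \<mu>"
    and zero_freq: "(\<Sum>k\<in>{k\<in>K. \<omega> k = 0}. c k) \<le> c j + c j'"
    and "0 < (\<Sum>k\<in>K. c k)"
  shows "(INF t\<in>{0<..}. \<bar>\<Sum>k\<in>K. c k * cos (t * \<omega> k)\<bar>) = 0"
proof -
  define g where "g t = (\<Sum>k\<in>K. c k * cos (t * \<omega> k))" for t
  define S where "S = (INF t\<in>{0<..}. \<bar>g t\<bar>)"
  have bdd: "bdd_below ((\<lambda>t. \<bar>g t\<bar>) ` {0<..})"
    by (intro bdd_belowI[of _ 0]) auto
  have "S \<ge> 0"
    unfolding S_def by (rule cINF_greatest) auto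
  moreover have "\<not> S > 0"
  proof
    assume "S > 0"
    have "S \<le> \<bar>g t\<bar>" if "t > 0" for t
      unfolding S_def using that by (intro cINF_lower bdd) auto
    then have "S \<le> g t" if "t \<ge> 0" for t
      using \<open>S > 0\<close> \<open>0 < (\<Sum>k\<in>K. c k)\<close> that
      by (intro lower_bound_of_abs_lower_bound[of g]) (auto simp: g_def intro!: continuous_intros)
    then have "S + c j + c j' \<le> (\<Sum>k\<in>{k\<in>K. \<omega> k = 0}. c k)"
      using assms by (intro cos_poly_lower_bound_le[of K \<omega> j j' \<mu>]) (auto simp: g_def)
    then show False
      using zero_freq \<open>S > 0\<close> by simp
  qed
  ultimately show ?thesis
    by (simp add: S_def g_def)
qed

section \<open>Trigonometric sums\<close>

lemma sin_half_mult_sum_cos: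
  "2 * sin (y / 2) * (\<Sum>j<K. cos (real j * y)) = sin ((2 * real K - 1) * y / 2) + sin (y / 2)"
proof (induction K)
  case (Suc K)
  have shift: "(2 * real (Suc K) - 1) * y / 2 = real K * y + y / 2"
    "(2 * real K - 1) * y / 2 = real K * y - y / 2"
    by (simp_all add: field_simps)
  have "2 * sin (y / 2) * (\<Sum>j<Suc K. cos (real j * y)) =
      sin ((2 * real K - 1) * y / 2) + sin (y / 2) + 2 * sin (y / 2) * cos (real K * y)"
    using Suc by (simp add: algebra_simps)
  also have "\<dots> = sin ((2 * real (Suc K) - 1) * y / 2) + sin (y / 2)"
    unfolding shift by (simp add: sin_add sin_diff algebra_simps)
  finally show ?case .
qed simp

lemma sum_cos_pi_multiple:
  fixes m N :: nat
  assumes "0 < m" "m < 2 * N"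
  shows "(\<Sum>j<N. cos (real j * (pi * real m / real N))) = (if odd m then 1 else 0)"
proof -
  define y where "y = pi * real m / real N"
  have "0 < y / 2" "y / 2 < pi"
    using assms by (auto simp: y_def field_simps)
  then have sin_pos: "sin (y / 2) > 0"
    by (rule sin_gt_zero)
  have "(2 * real N - 1) * y / 2 = pi * real m - y / 2"
    using assms by (simp add: y_def field_simps)
  moreover have "sin (pi * real m - y / 2) = - ((-1) ^ m) * sin (y / 2)"
    by (simp add: sin_diff sin_npi2 cos_npi2)
  ultimately have "sin ((2 * real N - 1) * y / 2) = - ((-1) ^ m) * sin (y / 2)"
    by (simp only:)
  then have "sin (y / 2) * (2 * (\<Sum>j<N. cos (real j * y)) - (1 - (-1) ^ m)) = 0"
    using sin_half_mult_sum_cos[of y N] by (simp add: algebra_simps)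
  then have "(\<Sum>j<N. cos (real j * y)) = (1 - (-1) ^ m) / 2"
    using sin_pos by simp
  then show ?thesis
    by (cases "even m") (simp_all add: y_def)
qed

lemma sum_sin_mult_sin_pi_multiple:
  fixes a b N :: nat
  assumes "1 \<le> a" "a < N" "1 \<le> b" "b < N"
  shows "(\<Sum>j<N. sin (real j * (pi * real a / real N)) * sin (real j * (pi * real b / real N)))
         = (if a = b then real N / 2 else 0)"
proof -
  let ?C = "\<lambda>x. \<Sum>j<N. cos (real j * (pi * x / real N))"
  have summand: "sin (real j * (pi * real a / real N)) * sin (real j * (pi * real b / real N)) =
      (cos (real j * (pi * (real a - real b) / real N)) - cos (real j * (pi * real (a + b) / real N))) / 2" for j
    by (simp add: sin_times_sin diff_divide_distrib add_divide_distrib algebra_simps)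
  have sum: "(\<Sum>j<N. sin (real j * (pi * real a / real N)) * sin (real j * (pi * real b / real N))) =
      (?C (real a - real b) - ?C (real (a + b))) / 2"
    by (simp only: summand sum_divide_distrib[symmetric] sum_subtractf)
  have sum_plus: "?C (real (a + b)) = (if odd (a + b) then 1 else 0)"
    using assms by (intro sum_cos_pi_multiple) auto
  have sum_minus: "?C (real a - real b) = (if a = b then real N else if odd (a + b) then 1 else 0)"
  proof -
    consider "a = b" | "b < a" | "a < b"
      by linarith
    then show ?thesis
    proof cases
      case 2
      then have "?C (real a - real b) = ?C (real (a - b))"
        by (simp add: of_nat_diff)
      also have "\<dots> = (if odd (a - b) then 1 else 0)"
        using 2 assms by (intro sum_cos_pi_multiple) auto
      finally show ?thesis
        using 2 by simp
    next
      case 3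
      have "real j * (pi * (real a - real b) / real N) = - (real j * (pi * real (b - a) / real N))" for j
        using 3 by (simp add: of_nat_diff algebra_simps diff_divide_distrib)
      then have "?C (real a - real b) = ?C (real (b - a))"
        by simp
      also have "\<dots> = (if odd (b - a) then 1 else 0)"
        using 3 assms by (intro sum_cos_pi_multiple) auto
      finally show ?thesis
        using 3 by simp
    qed simp
  qed
  show ?thesis
    unfolding sum sum_minus sum_plus by simp
qed

lemma sin_squared_ge_half:
  fixes x :: real
  assumes "pi / 4 \<le> x" "x \<le> 3 * pi / 4"
  shows "1 / 2 \<le> (sin x)\<^sup>2"
proof -
  have "cos x \<le> cos (pi / 4)"
    using assms by (intro cos_monotone_0_pi_le) auto
  moreover have "cos (pi - pi / 4) \<le> cos x"
    using assms by (intro cos_monotone_0_pi_le) auto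
  then have "- cos (pi / 4) \<le> cos x"
    by (simp only: cos_pi_minus)
  ultimately have "\<bar>cos x\<bar> \<le> sqrt 2 / 2"
    by (simp add: cos_45 abs_le_iff)
  then have "(cos x)\<^sup>2 \<le> (sqrt 2 / 2)\<^sup>2"
    by (metis abs_ge_zero power2_abs power_mono)
  then have "(cos x)\<^sup>2 \<le> 1 / 2"
    by (simp add: power_divide)
  then show ?thesis
    using sin_cos_squared_add[of x] by linarith
qed

section \<open>Spectral decomposition of the path\<close>

text \<open>The eigenpairs of \<open>P\<^sub>n\<close>, \<open>k = 1..n\<close>: the eigenvector \<open>v \<mapsto> sin (\<pi> k (v + 1) / (n + 1))\<close>
  has eigenvalue \<open>2 cos (\<pi> k / (n + 1))\<close> and squared norm \<open>(n + 1) / 2\<close>.\<close>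
definition path_angle :: "nat \<Rightarrow> nat \<Rightarrow> real" where
  "path_angle n k = pi * real k / real (Suc n)"

definition path_eigenvalue :: "nat \<Rightarrow> nat \<Rightarrow> real" where
  "path_eigenvalue n k = 2 * cos (path_angle n k)"

definition path_eigenvector :: "nat \<Rightarrow> nat \<Rightarrow> nat \<Rightarrow> real" where
  "path_eigenvector n k v = sin (path_angle n k * real (Suc v))"

definition path_weight :: "nat \<Rightarrow> nat \<Rightarrow> nat \<Rightarrow> real" where
  "path_weight n u k = 2 / real (Suc n) * (path_eigenvector n k u)\<^sup>2"

lemma path_adj_eigenvector:
  assumes "v < n"
  shows "(\<Sum>l<n. of_real (path_eigenvector n k l) * path_adj n l v) =
    complex_of_real (path_eigenvalue n k * path_eigenvector n k v)"
proof -
  define x where "x = path_angle n k"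
  have "(\<Sum>l<n. of_real (path_eigenvector n k l) * path_adj n l v) =
      (\<Sum>l<n. (if l = Suc v then of_real (path_eigenvector n k l) else 0) +
              (if Suc l = v then of_real (path_eigenvector n k l) else 0))"
    using assms by (intro sum.cong refl) (auto simp: path_adj_def)
  also have "\<dots> = of_real ((if Suc v < n then path_eigenvector n k (Suc v) else 0) +
      (if 0 < v then path_eigenvector n k (v - 1) else 0))"
    using assms by (cases v) (simp_all add: sum.distrib sum.delta)
  also have "(if Suc v < n then path_eigenvector n k (Suc v) else 0) = sin (x * real (Suc v) + x)"
  proof (cases "Suc v < n")
    case False
    then have "Suc v = n"
      using assms by simp
    then have "x * real (Suc v) + x = x * real (Suc n)"
      by (simp add: algebra_simps)
    also have "\<dots> = real k * pi"
      by (simp add: x_def path_angle_def del: of_nat_Suc)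
    finally show ?thesis
      using False by (simp add: sin_npi)
  qed (simp add: path_eigenvector_def x_def algebra_simps)
  also have "(if 0 < v then path_eigenvector n k (v - 1) else 0) = sin (x * real (Suc v) - x)"
    by (cases v) (auto simp: path_eigenvector_def x_def algebra_simps)
  also have "sin (x * real (Suc v) + x) + sin (x * real (Suc v) - x) =
      path_eigenvalue n k * path_eigenvector n k v"
    by (simp add: sin_add sin_diff path_eigenvalue_def path_eigenvector_def x_def)
  finally show ?thesis .
qed

lemma path_eigenvector_orthogonal:
  assumes "u < n" "v < n"
  shows "(\<Sum>k\<in>{1..n}. path_eigenvector n k u * path_eigenvector n k v) =
    (if u = v then real (Suc n) / 2 else 0)"
proof -
  have entry: "path_eigenvector n k w = sin (real k * (pi * real (Suc w) / real (Suc n)))" for k w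
    by (simp add: path_eigenvector_def path_angle_def algebra_simps)
  have "{..<Suc n} = insert 0 {1..n}"
    by auto
  then have "(\<Sum>k\<in>{1..n}. path_eigenvector n k u * path_eigenvector n k v) =
      (\<Sum>k<Suc n. path_eigenvector n k u * path_eigenvector n k v)"
    by (simp add: path_eigenvector_def path_angle_def)
  also have "\<dots> = (if Suc u = Suc v then real (Suc n) / 2 else 0)"
    unfolding entry using assms by (intro sum_sin_mult_sin_pi_multiple) auto
  finally show ?thesis
    by simp
qed

lemma mat_pow_path_adj:
  assumes "u < n" "v < n"
  shows "mat_pow n (path_adj n) k u v = (\<Sum>j\<in>{1..n}. complex_of_real
    (2 / real (Suc n) * path_eigenvalue n j ^ k * path_eigenvector n j u * path_eigenvector n j v))"
  using assms(2)
proof (induction k arbitrary: v)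
  case 0
  have "(\<Sum>j\<in>{1..n}. 2 / real (Suc n) * path_eigenvalue n j ^ 0 * path_eigenvector n j u * path_eigenvector n j v) =
      2 / real (Suc n) * (\<Sum>j\<in>{1..n}. path_eigenvector n j u * path_eigenvector n j v)"
    by (simp add: sum_distrib_left mult.assoc)
  also have "\<dots> = (if u = v then 1 else 0)"
    by (simp only: path_eigenvector_orthogonal[OF assms(1) 0]) (simp del: of_nat_Suc)
  finally have sum: "(\<Sum>j\<in>{1..n}. 2 / real (Suc n) * path_eigenvalue n j ^ 0 *
      path_eigenvector n j u * path_eigenvector n j v) = (if u = v then 1 else 0)" .
  show ?case
    by (simp only: mat_pow.simps of_real_sum[symmetric] sum) simp
next
  case (Suc k)
  define c where "c j = 2 / real (Suc n) * path_eigenvalue n j ^ k * path_eigenvector n j u" for j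
  have "mat_pow n (path_adj n) (Suc k) u v =
      (\<Sum>l<n. (\<Sum>j\<in>{1..n}. of_real (c j) * of_real (path_eigenvector n j l)) * path_adj n l v)"
    using Suc.IH by (simp add: c_def)
  also have "\<dots> = (\<Sum>j\<in>{1..n}. of_real (c j) *
      (\<Sum>l<n. of_real (path_eigenvector n j l) * path_adj n l v))"
    unfolding sum_distrib_left sum_distrib_right mult.assoc by (rule sum.swap)
  also have "\<dots> = (\<Sum>j\<in>{1..n}. of_real (c j * (path_eigenvalue n j * path_eigenvector n j v)))"
    using Suc.prems by (simp add: path_adj_eigenvector)
  finally show ?case
    by (simp add: c_def mult_ac)
qed

lemma transition_path_adj:
  assumes "u < n"
  shows "transition n (path_adj n) t u u =
    (\<Sum>j\<in>{1..n}. of_real (path_weight n u j) * exp (\<i> * of_real (t * path_eigenvalue n j)))"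
proof -
  have series_term: "(\<i> * of_real t) ^ k / of_nat (fact k) * mat_pow n (path_adj n) k u u =
      (\<Sum>j\<in>{1..n}. of_real (path_weight n u j) * ((\<i> * of_real (t * path_eigenvalue n j)) ^ k / of_nat (fact k)))"
    for k
    unfolding mat_pow_path_adj[OF assms assms] sum_distrib_left
    by (intro sum.cong refl) (simp add: path_weight_def power_mult_distrib power2_eq_square mult_ac)
  have exp_series: "(\<lambda>k. z ^ k / of_nat (fact k)) sums exp z" for z :: complex
    using exp_converges[of z] by (simp add: scaleR_conv_of_real divide_inverse mult.commute)
  have "(\<lambda>k. \<Sum>j\<in>{1..n}. of_real (path_weight n u j) * ((\<i> * of_real (t * path_eigenvalue n j)) ^ k / of_nat (fact k)))
      sums (\<Sum>j\<in>{1..n}. of_real (path_weight n u j) * exp (\<i> * of_real (t * path_eigenvalue n j)))"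
    by (intro sums_sum sums_mult exp_series)
  then show ?thesis
    unfolding transition_def series_term by (rule sums_unique[symmetric])
qed

lemma path_angle_reflect: "j \<le> Suc n \<Longrightarrow> path_angle n (Suc n - j) = pi - path_angle n j"
  by (simp add: path_angle_def of_nat_diff field_simps del: of_nat_Suc)

lemma path_eigenvalue_reflect: "j \<le> Suc n \<Longrightarrow> path_eigenvalue n (Suc n - j) = - path_eigenvalue n j"
  by (simp add: path_eigenvalue_def path_angle_reflect)

lemma sin_mult_path_angle_reflect:
  "j \<le> Suc n \<Longrightarrow> (sin (path_angle n (Suc n - j) * real m))\<^sup>2 = (sin (path_angle n j * real m))\<^sup>2"
  by (simp add: path_angle_reflect left_diff_distrib sin_diff sin_npi2 cos_npi2 power_mult_distrib
      flip: power_mult)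

lemma path_weight_reflect: "j \<le> Suc n \<Longrightarrow> path_weight n u (Suc n - j) = path_weight n u j"
  unfolding path_weight_def path_eigenvector_def by (simp only: sin_mult_path_angle_reflect)

lemma transition_path_adj_diag:
  assumes "u < n"
  shows "transition n (path_adj n) t u u =
    of_real (\<Sum>j\<in>{1..n}. path_weight n u j * cos (t * path_eigenvalue n j))"
proof -
  have "(\<Sum>j\<in>{1..n}. path_weight n u j * sin (t * path_eigenvalue n j)) =
      (\<Sum>j\<in>{1..n}. path_weight n u (n + 1 - j) * sin (t * path_eigenvalue n (n + 1 - j)))"
    by (rule sum.atLeastAtMost_rev)
  also have "\<dots> = - (\<Sum>j\<in>{1..n}. path_weight n u j * sin (t * path_eigenvalue n j))"
    by (simp add: path_eigenvalue_reflect path_weight_reflect sum_negf)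
  finally have "(\<Sum>j\<in>{1..n}. path_weight n u j * sin (t * path_eigenvalue n j)) = 0"
    by simp
  then show ?thesis
    unfolding transition_path_adj[OF assms]
    by (intro complex_eqI) (simp_all add: Re_exp Im_exp)
qed

section \<open>Eigenvalues and weights\<close>

lemma path_angle_bounds:
  assumes "1 \<le> k" "k \<le> n"
  shows "0 < path_angle n k \<and> path_angle n k < pi"
proof -
  have "pi * real k < pi * real (Suc n)"
    using assms by simp
  then show ?thesis
    using assms by (simp add: path_angle_def pos_divide_less_eq del: of_nat_Suc)
qed

lemma path_angle_mult_commute: "path_angle n j * real m = path_angle n m * real j"
  by (simp add: path_angle_def)

lemma abs_path_eigenvalue_less: "k \<in> {1..n} \<Longrightarrow> \<bar>path_eigenvalue n k\<bar> < 2"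
proof -
  assume "k \<in> {1..n}"
  then have "sin (path_angle n k) > 0"
    using path_angle_bounds[of k n] by (intro sin_gt_zero) auto
  then have "(cos (path_angle n k))\<^sup>2 < 1"
    using sin_cos_squared_add[of "path_angle n k"] zero_less_power[of "sin (path_angle n k)" 2] by linarith
  then show ?thesis
    by (simp add: path_eigenvalue_def abs_square_less_1)
qed

lemma inj_on_path_eigenvalue: "inj_on (path_eigenvalue n) {1..n}"
proof (rule inj_onI)
  fix k l assume "k \<in> {1..n}" "l \<in> {1..n}" "path_eigenvalue n k = path_eigenvalue n l"
  then have "path_angle n k = path_angle n l"
    using path_angle_bounds[of k n] path_angle_bounds[of l n]
      cos_inj_pi[of "path_angle n k" "path_angle n l"] by (auto simp: path_eigenvalue_def)
  then show "k = l"
    by (simp add: path_angle_def del: of_nat_Suc)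
qed

lemma path_eigenvalue_eq_0_iff:
  assumes "k \<in> {1..n}"
  shows "path_eigenvalue n k = 0 \<longleftrightarrow> 2 * k = Suc n"
proof -
  have "path_eigenvalue n k = 0 \<longleftrightarrow> cos (path_angle n k) = cos (pi / 2)"
    by (simp add: path_eigenvalue_def)
  also have "\<dots> \<longleftrightarrow> path_angle n k = pi / 2"
  proof
    assume "cos (path_angle n k) = cos (pi / 2)"
    then show "path_angle n k = pi / 2"
      using path_angle_bounds[of k n] assms cos_inj_pi[of "path_angle n k" "pi / 2"] by auto
  qed (erule arg_cong)
  also have "\<dots> \<longleftrightarrow> real (2 * k) = real (Suc n)"
    by (simp add: path_angle_def field_simps del: of_nat_Suc)
  finally show ?thesis
    by (simp only: of_nat_eq_iff)
qed

lemma path_eigenvalue_ge_1: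
  assumes "3 * j \<le> Suc n"
  shows "path_eigenvalue n j \<ge> 1"
proof -
  have "path_angle n j \<le> pi / 3"
    using assms by (simp add: path_angle_def field_simps del: of_nat_Suc)
  then have "cos (pi / 3) \<le> cos (path_angle n j)"
    by (intro cos_monotone_0_pi_le) (auto simp: path_angle_def)
  then show ?thesis
    by (simp add: path_eigenvalue_def cos_60)
qed

lemma path_weight_nonneg: "path_weight n u k \<ge> 0"
  by (simp add: path_weight_def)

lemma path_weight_le: "path_weight n u k \<le> 2 / real (Suc n)"
  unfolding path_weight_def path_eigenvector_def by (rule mult_left_le) (auto simp: abs_square_le_1)

lemma sum_path_weight:
  assumes "u < n"
  shows "(\<Sum>k\<in>{1..n}. path_weight n u k) = 1"
proof -
  have "(\<Sum>k\<in>{1..n}. path_weight n u k) =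
      2 / real (Suc n) * (\<Sum>k\<in>{1..n}. path_eigenvector n k u * path_eigenvector n k u)"
    by (simp add: path_weight_def power2_eq_square sum_distrib_left)
  also have "\<dots> = 1"
    by (simp only: path_eigenvector_orthogonal[OF assms assms]) (simp del: of_nat_Suc)
  finally show ?thesis .
qed

lemma exists_multiple_in_middle_half:
  fixes N b :: nat
  assumes "even N" "4 \<le> N" "1 \<le> b" "2 * b \<le> N"
  obtains j where "1 \<le> j" "3 * j \<le> N" "N \<le> 4 * (j * b)" "4 * (j * b) \<le> 3 * N"
proof (cases "N \<le> 4 * b")
  case True
  then show ?thesis
    using assms by (intro that[of 1]) auto
next
  case False
  define j where "j = (LEAST j. N \<le> 4 * (j * b))"
  have j: "N \<le> 4 * (j * b)"
    unfolding j_def by (rule LeastI[of _ N]) (use assms in simp)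
  then obtain i where i: "j = Suc i"
    using assms by (cases j) auto
  then have "i < j"
    by simp
  then have "\<not> N \<le> 4 * (i * b)"
    unfolding j_def by (rule not_less_Least)
  then have i_less: "4 * (i * b) < N"
    by simp
  moreover have "i \<le> i * b"
    using assms by simp
  ultimately have "4 * j < N + 4"
    using i by linarith
  then have "3 * j \<le> N"
    using assms(1,2) by presburger
  moreover have "4 * (j * b) \<le> 3 * N"
    using i_less i False by simp
  ultimately show ?thesis
    using j i by (intro that[of j]) auto
qed

lemma exists_heavy_path_weight:
  assumes "even (Suc n)" "3 \<le> n" "u < n"
  obtains j where "1 \<le> j" "3 * j \<le> Suc n" "1 / real (Suc n) \<le> path_weight n u j"
proof -
  define b where "b = min (Suc u) (Suc n - Suc u)"
  have b: "1 \<le> b" "2 * b \<le> Suc n"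
    using assms by (auto simp: b_def min_def)
  obtain j where j: "1 \<le> j" "3 * j \<le> Suc n" "Suc n \<le> 4 * (j * b)" "4 * (j * b) \<le> 3 * Suc n"
    using exists_multiple_in_middle_half[OF assms(1) _ b] assms(2) by auto
  have angle: "path_angle n j * real b = pi * real (j * b) / real (Suc n)"
    by (simp add: path_angle_def)
  moreover have "pi / 4 \<le> pi * real (j * b) / real (Suc n)" "pi * real (j * b) / real (Suc n) \<le> 3 * pi / 4"
    using j(3,4) by (simp_all add: field_simps del: of_nat_Suc of_nat_mult) (simp_all flip: of_nat_mult)
  ultimately have "1 / 2 \<le> (sin (path_angle n j * real b))\<^sup>2"
    by (simp only: angle sin_squared_ge_half)
  moreover have "(sin (path_angle n j * real b))\<^sup>2 = (sin (path_angle n j * real (Suc u)))\<^sup>2"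
  proof (cases "b = Suc u")
    case False
    then have "Suc u = Suc n - b" "b \<le> Suc n"
      using assms by (auto simp: b_def)
    then show ?thesis
      by (simp only: path_angle_mult_commute[of n j] sin_mult_path_angle_reflect)
  qed simp
  ultimately have "1 / real (Suc n) \<le> path_weight n u j"
    by (simp add: path_weight_def path_eigenvector_def field_simps del: of_nat_Suc)
  then show ?thesis
    using j by (intro that) auto
qed

lemma exists_path_eigenvalue_outweighing_0:
  assumes "3 \<le> n" "u < n"
  obtains j where "j \<in> {1..n}" "1 \<le> path_eigenvalue n j"
    "(\<Sum>k\<in>{k\<in>{1..n}. path_eigenvalue n k = 0}. path_weight n u k) \<le> 2 * path_weight n u j"
proof (cases "even (Suc n)")
  case True
  obtain j where j: "1 \<le> j" "3 * j \<le> Suc n" "1 / real (Suc n) \<le> path_weight n u j"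
    using exists_heavy_path_weight[OF True assms] .
  have "{k\<in>{1..n}. path_eigenvalue n k = 0} = {Suc n div 2}"
    using True assms by (auto simp: path_eigenvalue_eq_0_iff)
  then have "(\<Sum>k\<in>{k\<in>{1..n}. path_eigenvalue n k = 0}. path_weight n u k) \<le> 2 / real (Suc n)"
    by (simp add: path_weight_le del: of_nat_Suc)
  also have "\<dots> \<le> 2 * path_weight n u j"
    using j(3) by (simp add: field_simps del: of_nat_Suc)
  finally show ?thesis
    using j by (intro that[of j] path_eigenvalue_ge_1) auto
next
  case False
  then have no_zero: "{k\<in>{1..n}. path_eigenvalue n k = 0} = {}"
    by (auto simp: path_eigenvalue_eq_0_iff, presburger)
  show ?thesis
  proof (rule that[of 1])
    show "(\<Sum>k\<in>{k\<in>{1..n}. path_eigenvalue n k = 0}. path_weight n u k) \<le> 2 * path_weight n u 1"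
      unfolding no_zero by (simp add: path_weight_nonneg)
  qed (use assms in \<open>auto intro: path_eigenvalue_ge_1\<close>)
qed

theorem theorem43:
  fixes n u :: nat
  assumes "n \<ge> 3" and "u < n"
  shows "\<not> sedentary n (path_adj n) u \<and>
         (INF t\<in>{0<..}. norm (transition n (path_adj n) t u u)) = 0"
proof -
  obtain j where j: "j \<in> {1..n}" "1 \<le> path_eigenvalue n j"
    "(\<Sum>k\<in>{k\<in>{1..n}. path_eigenvalue n k = 0}. path_weight n u k) \<le> 2 * path_weight n u j"
    using exists_path_eigenvalue_outweighing_0 assms by blast
  have "(INF t\<in>{0<..}. norm (transition n (path_adj n) t u u)) =
      (INF t\<in>{0<..}. \<bar>\<Sum>k\<in>{1..n}. path_weight n u k * cos (t * path_eigenvalue n k)\<bar>)"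
    by (simp only: transition_path_adj_diag[OF assms(2)] norm_of_real)
  also have "\<dots> = 0"
  proof (rule INF_abs_cos_poly_eq_0[of _ _ j "Suc n - j" "path_eigenvalue n j"])
    show "\<bar>path_eigenvalue n k\<bar> < 2 * path_eigenvalue n j" if "k \<in> {1..n}" for k
      using abs_path_eigenvalue_less[OF that] j(2) by linarith
    show "(\<Sum>k\<in>{k\<in>{1..n}. path_eigenvalue n k = 0}. path_weight n u k) \<le>
        path_weight n u j + path_weight n u (Suc n - j)"
      using j by (simp add: path_weight_reflect)
    show "inj_on (path_eigenvalue n) {1..n}"
      by (rule inj_on_path_eigenvalue)
    show "0 < (\<Sum>k\<in>{1..n}. path_weight n u k)"
      using sum_path_weight[OF assms(2)] by simp
  qed (use j in \<open>auto simp: path_eigenvalue_reflect\<close>)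
  finally show ?thesis
    by (auto simp: sedentary_def)
qed

end
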